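(* Let $N\ge1$ and $L=\sum_{i=0}^N a_i(x)\partial_x^i$ with $a_i(x)=\sum_{j=0}^i a_{i,j}x^j$ complex polynomials, $a_0\equiv0$, and $a_i\equiv 0$ for $i>N$. Suppose there are complex numbers $\lambda_n$ ($n\ge0$, $\lambda_0=0$) and monic polynomials $P_n(x)=\sum_{i=0}^n b_{n,i}x^i$ of degree $n$ such that $\sum_{i=1}^N a_i(x)\partial_x^iP_n(x)=\lambda_nP_n(x)$ for all $n\ge0$, and assume $\lambda_n\notin\{0,\lambda_1,\ldots,\lambda_{n-1}\}$ for all $n\ge1$. Let $\delta_n^{(k)}=\sum_{i=k}^{n}\binom{n}{i}i!\,a_{i,i-k}$ for $0\le k\le n$. Then for every $n\ge0$ and $i=0,1,\ldots,n-1$, $$b_{n,i}=\sum_{(i_1,\ldots,i_k)\in E_n^{(i)}}\ \prod_{s=1}^k\frac{\delta^{(i_s)}_{i+i_1+\cdots+i_s}}{\lambda_n-\lambda_{i+i_1+\cdots+i_{s-1}}},$$ where $E_n^{(i)}=\{(i_1,\ldots,i_k): k\ge1,\ i_1,\ldots,i_k \text{ positive integers},\ i_1+\cdots+i_k=n-i\}$ and $i+i_1+\cdots+i_{s-1}$ is understood as $i$ when $s=1$.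
   Context: $\partial_x^i$ denotes the $i$-th derivative in $x$. Note $\delta^{(k)}_m=0$ whenever $k>N$, since then all $a_{i,i-k}$ with $i\ge k$ vanish. *)

theory Defs
  imports "HOL-Computational_Algebra.Polynomial"
begin

definition coeff_poly :: "(nat \<Rightarrow> nat \<Rightarrow> complex) \<Rightarrow> nat \<Rightarrow> complex poly" where
  "coeff_poly a i = (\<Sum>j\<le>i. monom (a i j) j)"

definition diff_op :: "nat \<Rightarrow> (nat \<Rightarrow> nat \<Rightarrow> complex) \<Rightarrow> complex poly \<Rightarrow> complex poly" where
  "diff_op N a p = (\<Sum>i=1..N. coeff_poly a i * (pderiv ^^ i) p)"

definition delta :: "(nat \<Rightarrow> nat \<Rightarrow> complex) \<Rightarrow> nat \<Rightarrow> nat \<Rightarrow> complex" where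
  "delta a n k = (\<Sum>i=k..n. of_nat (n choose i) * of_nat (fact i) * a i (i - k))"

definition compositions :: "nat \<Rightarrow> nat list set" where
  "compositions m = {xs. xs \<noteq> [] \<and> (\<forall>x\<in>set xs. 0 < x) \<and> sum_list xs = m}"

end

theory Submission
  imports Defs
begin

text \<open>
  The operator maps \<open>x^m\<close> to \<open>\<Sum>k\<le>m. delta_m^(k) x^(m-k)\<close>. Comparing coefficients in
  \<open>L P_n = lam_n P_n\<close> therefore gives \<open>lam_i = delta_i^(0)\<close> and the triangular recurrence
  \<open>(lam_n - lam_i) b_(n,i) = \<Sum>x=1..n-i. delta_(i+x)^(x) b_(n,i+x)\<close> with \<open>b_(n,n) = 1\<close>.
  Unrolling it, every chain \<open>i < i + i_1 < \<dots> < n\<close> contributes the product of its step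
  weights, and these chains are exactly the compositions of \<open>n - i\<close>.
\<close>

lemma higher_pderiv_monom_choose:
  "(pderiv ^^ i) (monom c m) = monom (c * of_nat ((m choose i) * fact i)) (m - i)"
proof (induction i)
  case 0
  then show ?case by simp
next
  case (Suc i)
  have "(m - i) * (m choose i) = Suc i * (m choose Suc i)"
    by (metis binomial_absorb_comp binomial_absorption)
  then have "(m - i) * ((m choose i) * fact i) = (m choose Suc i) * fact (Suc i)"
    by (simp add: algebra_simps)
  then have "of_nat (m - i) * (c * of_nat ((m choose i) * fact i)) = c * of_nat ((m choose Suc i) * fact (Suc i))"
    by (metis (no_types, lifting) mult.left_commute of_nat_mult)
  then show ?case
    using Suc by (simp add: pderiv_monom)
qed

lemma coeff_coeff_poly: "coeff (coeff_poly a i) j = (if j \<le> i then a i j else 0)"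
  unfolding coeff_poly_def coeff_sum by (simp add: coeff_monom)

lemma diff_op_sum: "diff_op N a (sum f S) = (\<Sum>m\<in>S. diff_op N a (f m))"
  unfolding diff_op_def higher_pderiv_sum sum_distrib_left by (rule sum.swap)

lemma coeff_diff_op_monom:
  assumes a0: "\<And>j. a 0 j = 0" and a_vanish: "\<And>i j. i > N \<Longrightarrow> a i j = 0"
  shows "coeff (diff_op N a (monom c m)) t = (if t \<le> m then c * delta a m (m - t) else 0)"
proof -
  have coeff_term: "coeff (coeff_poly a i * (pderiv ^^ i) (monom c m)) t =
      (if t \<le> m \<and> m - t \<le> i then c * of_nat ((m choose i) * fact i) * a i (i - (m - t)) else 0)" for i
    by (cases "i \<le> m")
      (auto simp: higher_pderiv_monom_choose mult.commute[of "coeff_poly a i"] coeff_monom_mult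
        coeff_coeff_poly binomial_eq_0 add.commute)
  show ?thesis
  proof (cases "t \<le> m")
    case False
    then show ?thesis
      unfolding diff_op_def coeff_sum coeff_term by simp
  next
    case True
    define h where "h i = (if m - t \<le> i then c * of_nat ((m choose i) * fact i) * a i (i - (m - t)) else 0)" for i
    have "coeff (diff_op N a (monom c m)) t = sum h {1..N}"
      unfolding diff_op_def coeff_sum coeff_term h_def using True by simp
    also have "\<dots> = sum h {..N + m}"
      by (intro sum.mono_neutral_left) (auto simp: h_def a0 a_vanish Suc_le_eq)
    also have "\<dots> = sum h {m - t..m}"
      by (intro sum.mono_neutral_right) (auto simp: h_def a_vanish)
    also have "\<dots> = c * delta a m (m - t)"
      unfolding delta_def sum_distrib_left h_def by (intro sum.cong refl) (auto simp: algebra_simps)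
    finally show ?thesis
      using True by simp
  qed
qed

lemma coeff_diff_op:
  assumes "\<And>j. a 0 j = 0" and "\<And>i j. i > N \<Longrightarrow> a i j = 0"
  shows "coeff (diff_op N a p) t = (\<Sum>m\<le>degree p. if t \<le> m then coeff p m * delta a m (m - t) else 0)"
  by (subst poly_as_sum_of_monoms[symmetric])
    (simp add: diff_op_sum coeff_sum coeff_diff_op_monom[of a N, OF assms])

lemma coeff_eigenpolynomial:
  assumes "\<And>j. a 0 j = 0" and "\<And>i j. i > N \<Longrightarrow> a i j = 0"
    and eigen: "diff_op N a p = smult \<mu> p"
  shows "(\<mu> - delta a i 0) * coeff p i = (\<Sum>x=1..degree p - i. delta a (i + x) x * coeff p (i + x))"
proof (cases "i \<le> degree p")
  case True
  have "\<mu> * coeff p i = coeff (diff_op N a p) i"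
    using eigen by simp
  also have "\<dots> = (\<Sum>m\<le>degree p. if i \<le> m then coeff p m * delta a m (m - i) else 0)"
    by (rule coeff_diff_op[of a N, OF assms(1,2)])
  also have "\<dots> = (\<Sum>m\<in>{i..degree p}. coeff p m * delta a m (m - i))"
    by (simp add: sum.inter_filter[symmetric]) (intro sum.cong; auto)
  also have "\<dots> = (\<Sum>x\<in>{0..degree p - i}. delta a (i + x) x * coeff p (i + x))"
    using True by (intro sum.reindex_bij_witness[of _ "\<lambda>x. i + x" "\<lambda>m. m - i"]) auto
  also have "\<dots> = delta a i 0 * coeff p i + (\<Sum>x=1..degree p - i. delta a (i + x) x * coeff p (i + x))"
    by (simp add: sum.atLeast_Suc_atMost)
  finally show ?thesis
    by (simp add: algebra_simps)
qed (simp add: coeff_eq_0)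

lemma eigenvalue_eq_delta:
  assumes "\<And>j. a 0 j = 0" and "\<And>i j. i > N \<Longrightarrow> a i j = 0"
    and "diff_op N a p = smult \<mu> p" and "p \<noteq> 0"
  shows "\<mu> = delta a (degree p) 0"
  using coeff_eigenpolynomial[OF assms(1-3), of "degree p"] \<open>p \<noteq> 0\<close> by simp

lemma compositions_0: "compositions 0 = {}"
proof -
  have "xs = []" if "\<forall>x\<in>set xs. 0 < x" "sum_list xs = (0::nat)" for xs
    using that by (cases xs) auto
  then show ?thesis
    unfolding compositions_def by blast
qed

lemma compositions_unfold:
  assumes "m > 0"
  shows "compositions m = insert [m] (\<Union>x\<in>{1..<m}. (#) x ` compositions (m - x))"
proof (intro equalityI subsetI)
  fix xs
  assume xs: "xs \<in> compositions m"
  then obtain y ys where xs_eq: "xs = y # ys"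
    unfolding compositions_def by (cases xs) auto
  show "xs \<in> insert [m] (\<Union>x\<in>{1..<m}. (#) x ` compositions (m - x))"
  proof (cases ys)
    case Nil
    then show ?thesis
      using xs xs_eq by (simp add: compositions_def)
  next
    case (Cons z zs)
    then have "y \<in> {1..<m}" "ys \<in> compositions (m - y)"
      using xs xs_eq by (auto simp: compositions_def)
    then show ?thesis
      using xs_eq by blast
  qed
qed (use assms in \<open>auto simp: compositions_def\<close>)

lemma finite_compositions: "finite (compositions m)"
proof (induction m rule: less_induct)
  case (less m)
  then show ?case
    by (cases "m = 0") (simp_all add: compositions_0 compositions_unfold)
qed

lemma sum_compositions:
  assumes "m > 0"
  shows "sum f (compositions m) = f [m] + (\<Sum>x\<in>{1..<m}. \<Sum>ys\<in>compositions (m - x). f (x # ys))"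
proof -
  have "[m] \<notin> (\<Union>x\<in>{1..<m}. (#) x ` compositions (m - x))"
    by (auto simp: compositions_0)
  then have "sum f (compositions m) = f [m] + sum f (\<Union>x\<in>{1..<m}. (#) x ` compositions (m - x))"
    using assms by (simp add: compositions_unfold finite_compositions)
  also have "sum f (\<Union>x\<in>{1..<m}. (#) x ` compositions (m - x)) =
      (\<Sum>x\<in>{1..<m}. sum f ((#) x ` compositions (m - x)))"
    by (rule sum.UNION_disjoint) (auto simp: finite_compositions)
  also have "\<dots> = (\<Sum>x\<in>{1..<m}. \<Sum>ys\<in>compositions (m - x). f (x # ys))"
    by (simp add: sum.reindex)
  finally show ?thesis .
qed

text \<open>\<open>w j x\<close> is the weight of a step of length \<open>x\<close> starting at \<open>j\<close>.\<close>

definition composition_weight :: "(nat \<Rightarrow> nat \<Rightarrow> 'a::comm_monoid_mult) \<Rightarrow> nat \<Rightarrow> nat list \<Rightarrow> 'a" where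
  "composition_weight w i xs = (\<Prod>s<length xs. w (i + sum_list (take s xs)) (xs ! s))"

lemma composition_weight_Nil [simp]: "composition_weight w i [] = 1"
  by (simp add: composition_weight_def)

lemma composition_weight_Cons [simp]:
  "composition_weight w i (x # xs) = w i x * composition_weight w (i + x) xs"
  unfolding composition_weight_def
  by (simp add: prod.lessThan_Suc_shift add.assoc del: prod.lessThan_Suc)

lemma triangular_recurrence_eq_sum_compositions:
  fixes b :: "nat \<Rightarrow> 'a::comm_semiring_1"
  assumes top: "b n = 1"
    and recurrence: "\<And>j. j < n \<Longrightarrow> b j = (\<Sum>x=1..n - j. w j x * b (j + x))"
    and "i < n"
  shows "b i = (\<Sum>xs\<in>compositions (n - i). composition_weight w i xs)"
  using \<open>i < n\<close>
proof (induction "n - i" arbitrary: i rule: less_induct)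
  case less
  have "{1..n - i} = insert (n - i) {1..<n - i}"
    using less.prems by auto
  then have "b i = w i (n - i) + (\<Sum>x\<in>{1..<n - i}. w i x * b (i + x))"
    using recurrence[OF less.prems] top less.prems by simp
  also have "(\<Sum>x\<in>{1..<n - i}. w i x * b (i + x)) =
      (\<Sum>x\<in>{1..<n - i}. \<Sum>ys\<in>compositions (n - i - x). composition_weight w i (x # ys))"
  proof (intro sum.cong refl)
    fix x
    assume "x \<in> {1..<n - i}"
    then have "b (i + x) = (\<Sum>ys\<in>compositions (n - (i + x)). composition_weight w (i + x) ys)"
      by (intro less.hyps) auto
    then show "w i x * b (i + x) = (\<Sum>ys\<in>compositions (n - i - x). composition_weight w i (x # ys))"
      by (simp add: sum_distrib_left)
  qed
  finally show ?case
    using less.prems by (simp add: sum_compositions)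
qed

theorem theorem2:
  fixes N :: nat
    and a :: "nat \<Rightarrow> nat \<Rightarrow> complex"
    and lam :: "nat \<Rightarrow> complex"
    and P :: "nat \<Rightarrow> complex poly"
  assumes N_ge: "N \<ge> 1"
    and a0: "\<And>j. a 0 j = 0"
    and a_vanish: "\<And>i j. i > N \<Longrightarrow> a i j = 0"
    and lam0: "lam 0 = 0"
    and deg: "\<And>n. degree (P n) = n"
    and monic: "\<And>n. lead_coeff (P n) = 1"
    and eigen: "\<And>n. diff_op N a (P n) = smult (lam n) (P n)"
    and distinct: "\<And>n m. n \<ge> 1 \<Longrightarrow> m < n \<Longrightarrow> lam n \<noteq> lam m"
  shows "\<forall>n. \<forall>i<n. coeff (P n) i =
           (\<Sum>xs\<in>compositions (n - i).
              \<Prod>s<length xs. delta a (i + sum_list (take (Suc s) xs)) (xs ! s)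
                              / (lam n - lam (i + sum_list (take s xs))))"
proof (intro allI impI)
  fix n i :: nat
  assume "i < n"
  have lam_eq: "lam j = delta a j 0" for j
    using eigenvalue_eq_delta[OF a0 a_vanish eigen, of j] deg[of j] monic[of j] by force
  define w where "w j x = delta a (j + x) x / (lam n - lam j)" for j x
  have "coeff (P n) i = (\<Sum>xs\<in>compositions (n - i). composition_weight w i xs)"
  proof (rule triangular_recurrence_eq_sum_compositions[OF _ _ \<open>i < n\<close>])
    show "coeff (P n) n = 1"
      using monic[of n] deg[of n] by simp
    fix j
    assume "j < n"
    then have "lam n - lam j \<noteq> 0"
      using distinct[of n j] by simp
    moreover have "(lam n - lam j) * coeff (P n) j = (\<Sum>x=1..n - j. delta a (j + x) x * coeff (P n) (j + x))"
      using coeff_eigenpolynomial[OF a0 a_vanish eigen] deg lam_eq by metis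
    ultimately show "coeff (P n) j = (\<Sum>x=1..n - j. w j x * coeff (P n) (j + x))"
      by (simp add: w_def sum_divide_distrib[symmetric] nonzero_eq_divide_eq mult.commute)
  qed
  also have "\<dots> = (\<Sum>xs\<in>compositions (n - i).
              \<Prod>s<length xs. delta a (i + sum_list (take (Suc s) xs)) (xs ! s)
                              / (lam n - lam (i + sum_list (take s xs))))"
    unfolding composition_weight_def w_def
    by (intro sum.cong prod.cong refl) (simp add: take_Suc_conv_app_nth add.assoc)
  finally show "coeff (P n) i = \<dots>" .
qed

end
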